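(* Let $G_n$ be a finite simple graph with a fully interconnected graph decomposition $(G_{n_1},\ldots,G_{n_k})$. For each $i\in\{1,\ldots,k\}$ let $\lambda_{i,1},\ldots,\lambda_{i,n_i-1}$ be eigenvalues of $L_{G_{n_i}}$ with real eigenvectors $\mathbf v_{i,1},\ldots,\mathbf v_{i,n_i-1}\in\mathbb R^{V(G_{n_i})}$ such that $\{\mathbf v_{i,1},\ldots,\mathbf v_{i,n_i-1},\tfrac{1}{\sqrt{n_i}}\mathbf 1_{n_i}\}$ is an orthonormal basis of $\mathbb R^{V(G_{n_i})}$. For $j=1,\ldots,k$ let $\alpha_j(1),\ldots,\alpha_j(k)\in\mathbb R$ and let $\mathbf x_j\in\mathbb R^{V(G_n)}$ be the vector with $\mathbf x_j(v)=\alpha_j(l)$ for $v\in V(G_{n_l})$; put $N_j=\sum_{l=1}^k n_l\alpha_j(l)^2$. Assume $\{\mathbf x_j/\sqrt{N_j}\}_{j=1}^k$ is orthonormal and $L_{G_n}\mathbf x_j=\nu_j\mathbf x_j$ for real numbers $\nu_1,\ldots,\nu_k$ (equivalently, $\overline{L}_{G_n}(\alpha_j(1),\ldots,\alpha_j(k))^T=\nu_j(\alpha_j(1),\ldots,\alpha_j(k))^T$). Then for all $t\ge0$: (1) If $x,y\in V(G_{n_i})$, then $$P^x_{G_n,t}(y)=P^x_{G_{n_i},t}(y)+\widetilde P_{i,t}-\frac1{n_i^2}-\frac2{n_i}\sum_{j=1}^{n_i-1}\mathbf v_{i,j}(x)\mathbf v_{i,j}(y)\cos(t\lambda_{i,j})+2\sum_{j=1}^{n_i-1}\sum_{j'=1}^k\frac{\mathbf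 v_{i,j}(x)\mathbf v_{i,j}(y)\alpha_{j'}(i)^2\cos\{t(\lambda_{i,j}+\widetilde d_i-\nu_{j'})\}}{N_{j'}},$$ where $$P^x_{G_{n_i},t}(y)=\sum_{j=1}^{n_i-1}\mathbf v_{i,j}(x)^2\mathbf v_{i,j}(y)^2+\frac1{n_i^2}+2\sum_{1\le j<j'\le n_i-1}\mathbf v_{i,j}(x)\mathbf v_{i,j}(y)\mathbf v_{i,j'}(x)\mathbf v_{i,j'}(y)\cos\{t(\lambda_{i,j}-\lambda_{i,j'})\}+\frac2{n_i}\sum_{j=1}^{n_i-1}\mathbf v_{i,j}(x)\mathbf v_{i,j}(y)\cos(t\lambda_{i,j})$$ is the transition probability of the CTQW on $G_{n_i}$ itself, and $$\widetilde P_{i,t}=\sum_{j=1}^k\frac{\alpha_j(i)^4}{N_j^2}+2\sum_{1\le j<j'\le k}\frac{\alpha_j(i)^2\alpha_{j'}(i)^2\cos\{t(\nu_j-\nu_{j'})\}}{N_jN_{j'}}.$$ (2) If $x\in V(G_{n_i})$ and $y\in V(G_{n_{i'}})$ with $i\ne i'$, then $$P^x_{G_n,t}(y)=\sum_{j=1}^k\frac{\alpha_j(i)^2\alpha_j(i')^2}{N_j^2}+2\sum_{1\le j<j'\le k}\frac{\alpha_j(i)\alpha_j(i')\alpha_{j'}(i)\alpha_{j'}(i')\cos\{t(\nu_j-\nu_{j'})\}}{N_jN_{j'}}.$$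
   Context: For a finite simple graph $G$ with vertex set $V(G)$, $A_G$ is its adjacency matrix, $D_G$ the diagonal degree matrix, and $L_G=D_G-A_G$ its Laplacian. The continuous-time quantum walk (CTQW) on $G$ has evolution operator $U_{G,t}=e^{\sqrt{-1}\,tL_G}$ ($t\ge0$), and for $x,y\in V(G)$ the transition probability is $P^x_{G,t}(y)=|(U_{G,t})_{x,y}|^2$ (walker starting at $x$). A fully interconnected graph decomposition of a simple graph $G_n$ on $n$ vertices is a tuple $(G_{n_1},\ldots,G_{n_k})$ of induced subgraphs of $G_n$, $G_{n_i}$ having $n_i$ vertices, whose vertex sets partition $V(G_n)$, such that for every $i\ne j$ either every vertex of $G_{n_i}$ is adjacent to every vertex of $G_{n_j}$ (written $G_{n_i}\sim G_{n_j}$) or no vertex of $G_{n_i}$ is adjacent to any vertex of $G_{n_j}$. Set $\widetilde d_i=\sum_{j:\,G_{n_i}\sim G_{n_j}}n_j$. $\overline L_{G_n}$ is the $k\times k$ matrix with diagonal entries $\widetilde d_i$, $(i,j)$ entry $-n_j$ if $G_{n_i}\sim G_{n_j}$ ($i\neq j$), and $0$ otherwise. $\mathbf 1_m$ is the all-ones vector of length $m$; $\mathbf v(x)$ denotes the component of a vector at vertex $x$. *)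

theory Defs
  imports "HOL-Analysis.Analysis"
begin

definition simple_graph :: "'a set \<Rightarrow> ('a \<Rightarrow> 'a \<Rightarrow> bool) \<Rightarrow> bool" where
  "simple_graph V E \<longleftrightarrow> finite V \<and> (\<forall>x y. E x y \<longrightarrow> x \<in> V \<and> y \<in> V)
     \<and> (\<forall>x y. E x y \<longrightarrow> E y x) \<and> (\<forall>x. \<not> E x x)"

text \<open>Laplacian L = D - A of the (induced) graph on vertex set W with edge relation E;
  only entries with both indices in W are meaningful.\<close>
definition laplacian :: "'a set \<Rightarrow> ('a \<Rightarrow> 'a \<Rightarrow> bool) \<Rightarrow> 'a \<Rightarrow> 'a \<Rightarrow> real" where
  "laplacian W E x y =
     (if x = y then real (card {z \<in> W. E x z}) else if E x y then -1 else 0)"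

fun mat_pow :: "'a set \<Rightarrow> ('a \<Rightarrow> 'a \<Rightarrow> real) \<Rightarrow> nat \<Rightarrow> 'a \<Rightarrow> 'a \<Rightarrow> real" where
  "mat_pow W A 0 x y = (if x = y then 1 else 0)"
| "mat_pow W A (Suc m) x y = (\<Sum>z\<in>W. A x z * mat_pow W A m z y)"

definition ctqw_op :: "'a set \<Rightarrow> ('a \<Rightarrow> 'a \<Rightarrow> bool) \<Rightarrow> real \<Rightarrow> 'a \<Rightarrow> 'a \<Rightarrow> complex" where
  "ctqw_op W E t x y =
     (\<Sum>m. (\<i> * complex_of_real t) ^ m / of_nat (fact m)
            * complex_of_real (mat_pow W (laplacian W E) m x y))"

definition ctqw_prob :: "'a set \<Rightarrow> ('a \<Rightarrow> 'a \<Rightarrow> bool) \<Rightarrow> real \<Rightarrow> 'a \<Rightarrow> 'a \<Rightarrow> real" where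
  "ctqw_prob W E t x y = (cmod (ctqw_op W E t x y))^2"

definition parts_adj :: "('a \<Rightarrow> 'a \<Rightarrow> bool) \<Rightarrow> (nat \<Rightarrow> 'a set) \<Rightarrow> nat \<Rightarrow> nat \<Rightarrow> bool" where
  "parts_adj E P i j \<longleftrightarrow> (\<forall>x\<in>P i. \<forall>y\<in>P j. E x y)"

text \<open>Fully interconnected graph decomposition (P 1, ..., P k) of (V,E), parts given by
  their (nonempty) vertex sets; the parts are the induced subgraphs on these sets.\<close>
definition fully_interconnected_decomp ::
  "'a set \<Rightarrow> ('a \<Rightarrow> 'a \<Rightarrow> bool) \<Rightarrow> nat \<Rightarrow> (nat \<Rightarrow> 'a set) \<Rightarrow> bool" where
  "fully_interconnected_decomp V E k P \<longleftrightarrow>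
     (\<forall>i\<in>{1..k}. P i \<noteq> {} \<and> P i \<subseteq> V)
     \<and> (\<Union>i\<in>{1..k}. P i) = V
     \<and> (\<forall>i\<in>{1..k}. \<forall>j\<in>{1..k}. i \<noteq> j \<longrightarrow> P i \<inter> P j = {})
     \<and> (\<forall>i\<in>{1..k}. \<forall>j\<in>{1..k}. i \<noteq> j \<longrightarrow>
          parts_adj E P i j \<or> (\<forall>x\<in>P i. \<forall>y\<in>P j. \<not> E x y))"

definition dtilde :: "('a \<Rightarrow> 'a \<Rightarrow> bool) \<Rightarrow> nat \<Rightarrow> (nat \<Rightarrow> 'a set) \<Rightarrow> nat \<Rightarrow> real" where
  "dtilde E k P i = (\<Sum>j\<in>{j\<in>{1..k}. j \<noteq> i \<and> parts_adj E P i j}. real (card (P j)))"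

end

theory Submission
  imports Defs "Jordan_Normal_Form.Determinant"
begin

(* The continuous-time quantum walk is computed spectrally: whenever a family of
   real eigenvectors of a Laplacian resolves the identity on the vertex set, every power of
   the Laplacian, and hence the exponential series defining U_t, is the corresponding
   combination of eigenvalue powers, resp. of the phases exp(i t mu).  The transition
   probability is then the squared modulus of a real-weighted sum of phases, which expands
   into cosines of phase differences.

   For the whole graph such an eigenbasis is assembled from the data of the theorem:
   (a) an eigenvector of a part G_{n_i} orthogonal to the constant vector, extended by zero,
       is an eigenvector of L_{G_n} with eigenvalue shifted by d~_i (every vertex outside the
       part is adjacent to all or none of its vertices, and the vector sums to zero);
   (b) the normalized quotient vectors X_j / sqrt N_j are eigenvectors by assumption.
   Completeness of (a) and (b) together follows from completeness of the basis inside each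
   part and from orthonormality of the columns of the orthogonal k x k matrix
   alpha_j(l) sqrt(n_l / N_j). *)

section \<open>Spectral calculus for the quantum walk\<close>

text \<open>Two families are allowed so that the two kinds of eigenvectors
  arising below need not be merged into one index type.\<close>
lemma mat_pow_spectral:
  fixes M :: "'a \<Rightarrow> 'a \<Rightarrow> real" and u :: "'b \<Rightarrow> 'a \<Rightarrow> real" and w :: "'c \<Rightarrow> 'a \<Rightarrow> real"
  assumes eig_u: "\<forall>a\<in>A. \<forall>x\<in>W. (\<Sum>z\<in>W. M x z * u a z) = mu a * u a x"
    and eig_w: "\<forall>d\<in>D. \<forall>x\<in>W. (\<Sum>z\<in>W. M x z * w d z) = rho d * w d x"
    and resolution: "\<forall>x\<in>W. \<forall>y\<in>W.
          (\<Sum>a\<in>A. u a x * u a y) + (\<Sum>d\<in>D. w d x * w d y) = (if x = y then 1 else 0)"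
    and x: "x \<in> W" and y: "y \<in> W"
  shows "mat_pow W M m x y = (\<Sum>a\<in>A. mu a ^ m * u a x * u a y) + (\<Sum>d\<in>D. rho d ^ m * w d x * w d y)"
  using x
proof (induction m arbitrary: x)
  case 0
  then show ?case using resolution y by simp
next
  case (Suc m)
  have "mat_pow W M (Suc m) x y
      = (\<Sum>z\<in>W. M x z * ((\<Sum>a\<in>A. mu a ^ m * u a z * u a y) + (\<Sum>d\<in>D. rho d ^ m * w d z * w d y)))"
    using Suc.IH by simp
  also have "\<dots> = (\<Sum>a\<in>A. mu a ^ m * u a y * (\<Sum>z\<in>W. M x z * u a z))
                 + (\<Sum>d\<in>D. rho d ^ m * w d y * (\<Sum>z\<in>W. M x z * w d z))"
    by (simp add: distrib_left sum.distrib sum_distrib_left sum_distrib_right sum.swap[of _ W] mult_ac)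
  also have "\<dots> = (\<Sum>a\<in>A. mu a ^ Suc m * u a x * u a y) + (\<Sum>d\<in>D. rho d ^ Suc m * w d x * w d y)"
    using eig_u eig_w Suc.prems by (simp add: mult_ac)
  finally show ?case .
qed

text \<open>The exponential series of the scalar i t mu, written as in the definition of ctqw_op.\<close>
lemma exp_series_sums:
  "(\<lambda>m. (\<i> * complex_of_real t) ^ m / of_nat (fact m) * complex_of_real (mu ^ m))
     sums exp (\<i> * complex_of_real (t * mu))"
proof -
  have "(\<lambda>m. (\<i> * complex_of_real (t * mu)) ^ m /\<^sub>R fact m) sums exp (\<i> * complex_of_real (t * mu))"
    by (rule exp_converges)
  moreover have "\<And>m. (\<i> * complex_of_real (t * mu)) ^ m /\<^sub>R fact m
      = (\<i> * complex_of_real t) ^ m / of_nat (fact m) * complex_of_real (mu ^ m)"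
    by (simp add: scaleR_conv_of_real power_mult_distrib field_simps)
  ultimately show ?thesis by simp
qed

lemma ctqw_op_spectral:
  fixes u :: "'b \<Rightarrow> 'a \<Rightarrow> real" and w :: "'c \<Rightarrow> 'a \<Rightarrow> real"
  assumes "finite A" and "finite D"
    and eig_u: "\<forall>a\<in>A. \<forall>x\<in>W. (\<Sum>z\<in>W. laplacian W E x z * u a z) = mu a * u a x"
    and eig_w: "\<forall>d\<in>D. \<forall>x\<in>W. (\<Sum>z\<in>W. laplacian W E x z * w d z) = rho d * w d x"
    and resolution: "\<forall>x\<in>W. \<forall>y\<in>W.
          (\<Sum>a\<in>A. u a x * u a y) + (\<Sum>d\<in>D. w d x * w d y) = (if x = y then 1 else 0)"
    and x: "x \<in> W" and y: "y \<in> W"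
  shows "ctqw_op W E t x y
           = (\<Sum>a\<in>A. complex_of_real (u a x * u a y) * exp (\<i> * complex_of_real (t * mu a)))
           + (\<Sum>d\<in>D. complex_of_real (w d x * w d y) * exp (\<i> * complex_of_real (t * rho d)))"
proof -
  let ?c = "\<lambda>m. (\<i> * complex_of_real t) ^ m / of_nat (fact m)"
  have "?c m * complex_of_real (mat_pow W (laplacian W E) m x y)
     = (\<Sum>a\<in>A. complex_of_real (u a x * u a y) * (?c m * complex_of_real (mu a ^ m)))
     + (\<Sum>d\<in>D. complex_of_real (w d x * w d y) * (?c m * complex_of_real (rho d ^ m)))" for m
    unfolding mat_pow_spectral[OF eig_u eig_w resolution x y]
    by (simp add: distrib_left sum_distrib_left mult_ac)
  then have "(\<lambda>m. ?c m * complex_of_real (mat_pow W (laplacian W E) m x y)) sums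
      ((\<Sum>a\<in>A. complex_of_real (u a x * u a y) * exp (\<i> * complex_of_real (t * mu a)))
     + (\<Sum>d\<in>D. complex_of_real (w d x * w d y) * exp (\<i> * complex_of_real (t * rho d))))"
    by (simp only:) (intro sums_add sums_sum sums_mult exp_series_sums)
  then show ?thesis unfolding ctqw_op_def by (rule sums_unique[symmetric])
qed

section \<open>Squared moduli of sums of phases\<close>

lemma sum_symmetric_square:
  fixes f :: "nat \<Rightarrow> nat \<Rightarrow> real"
  assumes sym: "\<And>j j'. f j j' = f j' j"
  shows "(\<Sum>j\<in>{1..m}. \<Sum>j'\<in>{1..m}. f j j')
           = (\<Sum>j\<in>{1..m}. f j j) + 2 * (\<Sum>j\<in>{1..m}. \<Sum>j'\<in>{j+1..m}. f j j')"
proof (induction m)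
  case 0
  then show ?case by simp
next
  case (Suc m)
  have S: "{1..Suc m} = insert (Suc m) {1..m}" by auto
  have "{j+1..Suc m} = insert (Suc m) {j+1..m}" if "j \<in> {1..m}" for j
    using that by auto
  then have "(\<Sum>j\<in>{1..m}. \<Sum>j'\<in>{j+1..Suc m}. f j j')
      = (\<Sum>j\<in>{1..m}. \<Sum>j'\<in>{j+1..m}. f j j') + (\<Sum>j\<in>{1..m}. f j (Suc m))"
    unfolding sum.distrib[symmetric] by (intro sum.cong) auto
  then have "(\<Sum>j\<in>{1..Suc m}. \<Sum>j'\<in>{j+1..Suc m}. f j j')
      = (\<Sum>j\<in>{1..m}. \<Sum>j'\<in>{j+1..m}. f j j') + (\<Sum>j\<in>{1..m}. f j (Suc m))"
    by (simp add: S)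
  moreover have "(\<Sum>j\<in>{1..Suc m}. \<Sum>j'\<in>{1..Suc m}. f j j')
      = (\<Sum>j\<in>{1..m}. \<Sum>j'\<in>{1..m}. f j j') + 2 * (\<Sum>j\<in>{1..m}. f j (Suc m)) + f (Suc m) (Suc m)"
    unfolding S using sym by (simp add: sum.distrib)
  ultimately show ?case unfolding Suc.IH by (simp add: S)
qed

lemma cmod_sq_phase_sums:
  fixes c :: "'b \<Rightarrow> real" and e :: "'c \<Rightarrow> real"
  shows "(cmod ((\<Sum>a\<in>A. complex_of_real (c a) * exp (\<i> * complex_of_real (th a)))
               + (\<Sum>d\<in>D. complex_of_real (e d) * exp (\<i> * complex_of_real (ph d)))))^2
   = (\<Sum>a\<in>A. \<Sum>a'\<in>A. c a * c a' * cos (th a - th a'))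
   + (\<Sum>d\<in>D. \<Sum>d'\<in>D. e d * e d' * cos (ph d - ph d'))
   + 2 * (\<Sum>a\<in>A. \<Sum>d\<in>D. c a * e d * cos (th a - ph d))"
proof -
  let ?z = "(\<Sum>a\<in>A. complex_of_real (c a) * exp (\<i> * complex_of_real (th a)))
            + (\<Sum>d\<in>D. complex_of_real (e d) * exp (\<i> * complex_of_real (ph d)))"
  have re: "Re ?z = (\<Sum>a\<in>A. c a * cos (th a)) + (\<Sum>d\<in>D. e d * cos (ph d))"
    by (simp add: Re_sum Re_exp)
  have im: "Im ?z = (\<Sum>a\<in>A. c a * sin (th a)) + (\<Sum>d\<in>D. e d * sin (ph d))"
    by (simp add: Im_sum Im_exp)
  have "(cmod ?z)^2 = (Re ?z)^2 + (Im ?z)^2" by (simp add: cmod_power2)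
  also have "\<dots> = (\<Sum>a\<in>A. \<Sum>a'\<in>A. c a * c a' * cos (th a - th a'))
   + (\<Sum>d\<in>D. \<Sum>d'\<in>D. e d * e d' * cos (ph d - ph d'))
   + 2 * (\<Sum>a\<in>A. \<Sum>d\<in>D. c a * e d * cos (th a - ph d))"
    unfolding re im cos_diff
    by (simp add: power2_eq_square algebra_simps sum_product sum.distrib sum_distrib_left sum.swap[of _ D A])
  finally show ?thesis .
qed

lemma cmod_sq_phase_sum:
  fixes c th :: "nat \<Rightarrow> real"
  shows "(cmod (\<Sum>j\<in>{1..m}. complex_of_real (c j) * exp (\<i> * complex_of_real (th j))))^2
    = (\<Sum>j\<in>{1..m}. (c j)^2) + 2 * (\<Sum>j\<in>{1..m}. \<Sum>j'\<in>{j+1..m}. c j * c j' * cos (th j - th j'))"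
proof -
  have "(cmod (\<Sum>j\<in>{1..m}. complex_of_real (c j) * exp (\<i> * complex_of_real (th j))))^2
      = (\<Sum>j\<in>{1..m}. \<Sum>j'\<in>{1..m}. c j * c j' * cos (th j - th j'))"
    using cmod_sq_phase_sums[where A = "{} :: nat set" and D = "{1..m}" and e = c and ph = th] by simp
  also have "\<dots> = (\<Sum>j\<in>{1..m}. c j * c j * cos (th j - th j))
                 + 2 * (\<Sum>j\<in>{1..m}. \<Sum>j'\<in>{j+1..m}. c j * c j' * cos (th j - th j'))"
    by (rule sum_symmetric_square) (simp add: mult_ac cos_diff)
  finally show ?thesis by (simp add: power2_eq_square)
qed

section \<open>Orthonormal systems\<close>

lemma orthonormal_rows_imp_columns:
  fixes a :: "nat \<Rightarrow> nat \<Rightarrow> real"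
  assumes rows: "\<forall>j\<in>{1..k}. \<forall>j'\<in>{1..k}. (\<Sum>l\<in>{1..k}. a j l * a j' l) = (if j = j' then 1 else 0)"
    and l: "l \<in> {1..k}" and l': "l' \<in> {1..k}"
  shows "(\<Sum>j\<in>{1..k}. a j l * a j l') = (if l = l' then 1 else 0)"
proof -
  define M where "M = mat k k (\<lambda>(j, l). a (Suc j) (Suc l))"
  have M: "M \<in> carrier_mat k k" and MT: "transpose_mat M \<in> carrier_mat k k"
    unfolding M_def by auto
  have "M * transpose_mat M = 1\<^sub>m k"
    using rows by (intro eq_matI) (auto simp: M_def scalar_prod_def atLeast0LessThan sum.atLeast1_atMost_eq)
  then have "transpose_mat M * M = 1\<^sub>m k" by (rule mat_mult_left_right_inverse[OF M MT])
  then have "(transpose_mat M * M) $$ (l - 1, l' - 1) = 1\<^sub>m k $$ (l - 1, l' - 1)" by simp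
  then show ?thesis
    using l l' by (auto simp: M_def scalar_prod_def atLeast0LessThan sum.atLeast1_atMost_eq)
qed

lemma onb_with_constant_resolution:
  fixes S :: "'a set" and vv :: "nat \<Rightarrow> 'a \<Rightarrow> real"
  assumes fS: "finite S" and ne: "S \<noteq> {}"
    and orth: "\<forall>j\<in>{1..m}. \<forall>j'\<in>{1..m}. (\<Sum>x\<in>S. vv j x * vv j' x) = (if j = j' then 1 else 0)"
    and orth1: "\<forall>j\<in>{1..m}. (\<Sum>x\<in>S. vv j x * (1 / sqrt (real (card S)))) = 0"
    and span: "\<forall>f :: 'a \<Rightarrow> real. \<exists>c :: nat \<Rightarrow> real. \<exists>c0 :: real.
                  \<forall>x\<in>S. f x = (\<Sum>j\<in>{1..m}. c j * vv j x) + c0 * (1 / sqrt (real (card S)))"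
    and x: "x \<in> S" and y: "y \<in> S"
  shows "(\<Sum>j\<in>{1..m}. vv j x * vv j y) + 1 / real (card S) = (if x = y then 1 else 0)"
proof -
  define s where "s = 1 / sqrt (real (card S))"
  have cpos: "real (card S) > 0" using fS ne by (simp add: card_gt_0_iff)
  have ss: "s * s = 1 / real (card S)" unfolding s_def using cpos by (simp add: field_simps)
  have sum_zero: "(\<Sum>x\<in>S. vv j x) = 0" if "j \<in> {1..m}" for j
  proof -
    have "(\<Sum>x\<in>S. vv j x) / sqrt (real (card S)) = 0"
      using orth1 that by (simp add: sum_divide_distrib)
    then show ?thesis using cpos by simp
  qed
  text \<open>Expand the indicator vector of y in the basis and read off its coefficients.\<close>
  define f where "f = (\<lambda>z. if z = y then (1::real) else 0)"
  obtain c c0 where fc: "\<forall>z\<in>S. f z = (\<Sum>j\<in>{1..m}. c j * vv j z) + c0 * s"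
    using span unfolding s_def by blast
  have expand: "(\<Sum>z\<in>S. f z * g z)
      = (\<Sum>j'\<in>{1..m}. c j' * (\<Sum>z\<in>S. vv j' z * g z)) + c0 * s * (\<Sum>z\<in>S. g z)" for g
  proof -
    have "(\<Sum>z\<in>S. f z * g z) = (\<Sum>z\<in>S. (\<Sum>j'\<in>{1..m}. c j' * vv j' z) * g z + c0 * s * g z)"
      using fc by (intro sum.cong) (auto simp: distrib_right)
    then show ?thesis
      by (simp add: sum.distrib sum_distrib_left sum_distrib_right sum.swap[of _ S] mult_ac)
  qed
  have pick: "(\<Sum>z\<in>S. f z * g z) = g y" for g
    using y fS by (simp add: f_def if_distrib[of "\<lambda>r. r * _"] cong: if_cong)
  have cj: "c j = vv j y" if j: "j \<in> {1..m}" for j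
  proof -
    have "(\<Sum>j'\<in>{1..m}. c j' * (\<Sum>z\<in>S. vv j' z * vv j z)) = (\<Sum>j'\<in>{1..m}. if j' = j then c j else 0)"
      using orth j by (intro sum.cong) auto
    then show ?thesis using expand[of "vv j"] pick[of "vv j"] sum_zero j by simp
  qed
  have c0: "c0 * s = s * s"
  proof -
    have "c0 * s * real (card S) = 1"
      using expand[of "\<lambda>_. 1"] pick[of "\<lambda>_. 1"] sum_zero by simp
    then have "c0 * s = 1 / real (card S)" using cpos by (simp add: field_simps)
    then show ?thesis using ss by simp
  qed
  have "f x = (\<Sum>j\<in>{1..m}. c j * vv j x) + c0 * s" using fc x by blast
  then show ?thesis using cj c0 ss by (simp add: f_def mult.commute)
qed

section \<open>Laplacians of fully interconnected decompositions\<close>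

lemma laplacian_row_sum:
  assumes "finite W" and "\<not> E x x" and "x \<in> W"
  shows "(\<Sum>z\<in>W. laplacian W E x z) = 0"
proof -
  have "(\<Sum>z\<in>W. laplacian W E x z)
      = (\<Sum>z\<in>W. (if x = z then real (card {w \<in> W. E x w}) else 0) - (if E x z then 1 else 0))"
    using assms(2) by (intro sum.cong) (auto simp: laplacian_def)
  also have "\<dots> = 0"
    using assms(1,3) by (simp add: sum_subtractf sum.inter_filter[symmetric])
  finally show ?thesis .
qed

locale fully_interconnected_graph =
  fixes V :: "'a set" and E :: "'a \<Rightarrow> 'a \<Rightarrow> bool" and k :: nat and P :: "nat \<Rightarrow> 'a set"
  assumes graph: "simple_graph V E"
    and decomp: "fully_interconnected_decomp V E k P"
begin

lemma finite_V: "finite V"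
  using graph by (simp add: simple_graph_def)

lemma irrefl: "\<not> E x x"
  using graph by (simp add: simple_graph_def)

lemma part_nonempty: "i \<in> {1..k} \<Longrightarrow> P i \<noteq> {}"
  and part_subset: "i \<in> {1..k} \<Longrightarrow> P i \<subseteq> V"
  and parts_cover: "(\<Union>i\<in>{1..k}. P i) = V"
  and parts_disjoint: "i \<in> {1..k} \<Longrightarrow> i' \<in> {1..k} \<Longrightarrow> i \<noteq> i' \<Longrightarrow> P i \<inter> P i' = {}"
  and adj_or_nonadj: "i \<in> {1..k} \<Longrightarrow> i' \<in> {1..k} \<Longrightarrow> i \<noteq> i' \<Longrightarrow>
          parts_adj E P i i' \<or> (\<forall>x\<in>P i. \<forall>y\<in>P i'. \<not> E x y)"
  using decomp by (auto simp: fully_interconnected_decomp_def)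

lemma finite_part: "i \<in> {1..k} \<Longrightarrow> finite (P i)"
  using part_subset finite_V finite_subset by blast

lemma card_part_pos: "i \<in> {1..k} \<Longrightarrow> real (card (P i)) > 0"
  using finite_part part_nonempty by (simp add: card_gt_0_iff)

lemma part_unique: "i \<in> {1..k} \<Longrightarrow> i' \<in> {1..k} \<Longrightarrow> x \<in> P i \<Longrightarrow> x \<in> P i' \<Longrightarrow> i = i'"
  using parts_disjoint by blast

lemma part_of_vertex: "x \<in> V \<Longrightarrow> \<exists>i\<in>{1..k}. x \<in> P i"
  using parts_cover by blast

lemma sum_over_parts: "(\<Sum>u\<in>V. g u) = (\<Sum>l\<in>{1..k}. \<Sum>u\<in>P l. g u)"
  unfolding parts_cover[symmetric]
  by (rule sum.UNION_disjoint) (use finite_part parts_disjoint in auto)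

lemma degree_split:
  assumes i: "i \<in> {1..k}" and x: "x \<in> P i"
  shows "real (card {z \<in> V. E x z}) = real (card {z \<in> P i. E x z}) + dtilde E k P i"
proof -
  have count: "real (card {z \<in> S. E x z}) = (\<Sum>z\<in>S. if E x z then 1 else 0)" if "finite S" for S
    using that by (simp add: sum.inter_filter[symmetric])
  have outside: "(\<Sum>z\<in>P l. if E x z then 1 else 0) = (if parts_adj E P i l then real (card (P l)) else 0)"
    if l: "l \<in> {1..k} - {i}" for l
  proof (cases "parts_adj E P i l")
    case True
    then show ?thesis using x by (simp add: parts_adj_def)
  next
    case False
    then have "\<forall>z\<in>P l. \<not> E x z" using adj_or_nonadj[of i l] i l x by auto
    then show ?thesis using False by simp
  qed
  have "real (card {z \<in> V. E x z}) = (\<Sum>l\<in>{1..k}. \<Sum>z\<in>P l. if E x z then 1 else 0)"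
    using count[OF finite_V] sum_over_parts by simp
  also have "\<dots> = (\<Sum>z\<in>P i. if E x z then 1 else 0)
                 + (\<Sum>l\<in>{1..k} - {i}. if parts_adj E P i l then real (card (P l)) else 0)"
    using i outside by (simp add: sum.remove)
  also have "(\<Sum>l\<in>{1..k} - {i}. if parts_adj E P i l then real (card (P l)) else 0) = dtilde E k P i"
    unfolding dtilde_def by (simp add: sum.inter_filter[symmetric])
  finally show ?thesis using count[OF finite_part[OF i]] by simp
qed

lemma lifted_eigenvector:
  assumes i: "i \<in> {1..k}"
    and eig: "\<forall>x\<in>P i. (\<Sum>y\<in>P i. laplacian (P i) E x y * f y) = mu * f x"
    and sum_zero: "(\<Sum>y\<in>P i. f y) = 0"
    and x: "x \<in> V"
  shows "(\<Sum>z\<in>V. laplacian V E x z * (if z \<in> P i then f z else 0))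
           = (mu + dtilde E k P i) * (if x \<in> P i then f x else 0)"
proof -
  have restrict: "(\<Sum>z\<in>V. laplacian V E x z * (if z \<in> P i then f z else 0))
      = (\<Sum>z\<in>P i. laplacian V E x z * f z)"
    using finite_V part_subset[OF i]
    by (simp add: if_distrib[of "\<lambda>r. _ * r"] sum.inter_restrict[symmetric] Int_absorb1 cong: if_cong)
  show ?thesis
  proof (cases "x \<in> P i")
    case True
    have "(\<Sum>z\<in>P i. laplacian V E x z * f z)
        = (\<Sum>z\<in>P i. laplacian (P i) E x z * f z + (if z = x then dtilde E k P i * f x else 0))"
      using degree_split[OF i True] by (intro sum.cong) (auto simp: laplacian_def algebra_simps)
    also have "\<dots> = (mu + dtilde E k P i) * f x"
      using eig True finite_part[OF i] by (simp add: sum.distrib algebra_simps)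
    finally show ?thesis using restrict True by simp
  next
    case False
    obtain l where l: "l \<in> {1..k}" "x \<in> P l" using part_of_vertex[OF x] by blast
    have "l \<noteq> i" using False l by auto
    have "(\<Sum>z\<in>P i. laplacian V E x z * f z) = 0"
    proof (cases "parts_adj E P l i")
      case True
      then have "(\<Sum>z\<in>P i. laplacian V E x z * f z) = (\<Sum>z\<in>P i. - f z)"
        using False l by (intro sum.cong) (auto simp: laplacian_def parts_adj_def)
      then show ?thesis using sum_zero by (simp add: sum_negf)
    next
      case nonadj: False
      then have "\<forall>z\<in>P i. \<not> E x z" using adj_or_nonadj[of l i] l i \<open>l \<noteq> i\<close> by auto
      then show ?thesis using False by (intro sum.neutral) (auto simp: laplacian_def)
    qed
    then show ?thesis using restrict False by simp
  qed
qed

end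

section \<open>The spectral data of the theorem\<close>

lemma sum_Sigma_single_fibre:
  assumes "finite I" and "i0 \<in> I" and "\<forall>i\<in>I. finite (J i)"
    and vanish: "\<And>i j. i \<in> I \<Longrightarrow> i \<noteq> i0 \<Longrightarrow> j \<in> J i \<Longrightarrow> g (i, j) = 0"
  shows "sum g (SIGMA i:I. J i) = (\<Sum>j\<in>J i0. g (i0, j))"
proof -
  have "sum g (SIGMA i:I. J i) = (\<Sum>i\<in>I. \<Sum>j\<in>J i. g (i, j))"
    using assms(1,3) by (subst sum.Sigma) (auto simp: split_def)
  also have "\<dots> = (\<Sum>j\<in>J i0. g (i0, j))"
    using assms(1,2) vanish by (subst sum.remove[of _ i0]) (auto intro!: sum.neutral)
  finally show ?thesis .
qed

locale spectral_data = fully_interconnected_graph V E k P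
  for V :: "'a set" and E :: "'a \<Rightarrow> 'a \<Rightarrow> bool" and k :: nat and P :: "nat \<Rightarrow> 'a set" +
  fixes v :: "nat \<Rightarrow> nat \<Rightarrow> 'a \<Rightarrow> real" and lam :: "nat \<Rightarrow> nat \<Rightarrow> real"
    and alpha :: "nat \<Rightarrow> nat \<Rightarrow> real" and X :: "nat \<Rightarrow> 'a \<Rightarrow> real"
    and N :: "nat \<Rightarrow> real" and nu :: "nat \<Rightarrow> real"
  assumes v_eig: "\<forall>i\<in>{1..k}. \<forall>j\<in>{1..card (P i) - 1}. \<forall>x\<in>P i.
                  (\<Sum>y\<in>P i. laplacian (P i) E x y * v i j y) = lam i j * v i j x"
    and v_orth: "\<forall>i\<in>{1..k}. \<forall>j\<in>{1..card (P i) - 1}. \<forall>j'\<in>{1..card (P i) - 1}.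
                  (\<Sum>x\<in>P i. v i j x * v i j' x) = (if j = j' then 1 else 0)"
    and v_orth1: "\<forall>i\<in>{1..k}. \<forall>j\<in>{1..card (P i) - 1}.
                  (\<Sum>x\<in>P i. v i j x * (1 / sqrt (real (card (P i))))) = 0"
    and v_span: "\<forall>i\<in>{1..k}. \<forall>f :: 'a \<Rightarrow> real. \<exists>c :: nat \<Rightarrow> real. \<exists>c0 :: real.
                  \<forall>x\<in>P i. f x = (\<Sum>j\<in>{1..card (P i) - 1}. c j * v i j x)
                                 + c0 * (1 / sqrt (real (card (P i))))"
    and X_def: "\<forall>j\<in>{1..k}. \<forall>l\<in>{1..k}. \<forall>u\<in>P l. X j u = alpha j l"
    and N_def: "\<forall>j\<in>{1..k}. N j = (\<Sum>l\<in>{1..k}. real (card (P l)) * (alpha j l)^2)"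
    and X_orth: "\<forall>j\<in>{1..k}. \<forall>j'\<in>{1..k}.
                  (\<Sum>u\<in>V. (X j u / sqrt (N j)) * (X j' u / sqrt (N j'))) = (if j = j' then 1 else 0)"
    and X_eig: "\<forall>j\<in>{1..k}. \<forall>u\<in>V. (\<Sum>w\<in>V. laplacian V E u w * X j w) = nu j * X j u"
begin

lemma N_pos:
  assumes j: "j \<in> {1..k}"
  shows "N j > 0"
proof -
  have "N j \<ge> 0" using N_def j by (simp add: sum_nonneg)
  moreover have "N j \<noteq> 0" using X_orth[rule_format, OF j j] by auto
  ultimately show ?thesis by simp
qed

lemma quotient_entry_product:
  assumes "j \<in> {1..k}" "i \<in> {1..k}" "i' \<in> {1..k}" "x \<in> P i" "y \<in> P i'"
  shows "X j x / sqrt (N j) * (X j y / sqrt (N j)) = alpha j i * alpha j i' / N j"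
  using X_def assms N_pos[OF assms(1)] by (simp add: real_sqrt_mult[symmetric])

text \<open>Completeness of the quotient vectors: the k x k matrix alpha_j(l) sqrt(n_l / N_j) has
  orthonormal rows, hence orthonormal columns.\<close>
lemma quotient_resolution:
  assumes l: "l \<in> {1..k}" and l': "l' \<in> {1..k}"
  shows "(\<Sum>j\<in>{1..k}. alpha j l * alpha j l' / N j) = (if l = l' then 1 / real (card (P l)) else 0)"
proof -
  define n where "n i = real (card (P i))" for i
  define a where "a j l = alpha j l * sqrt (n l) / sqrt (N j)" for j l
  have rows: "\<forall>j\<in>{1..k}. \<forall>j'\<in>{1..k}. (\<Sum>l\<in>{1..k}. a j l * a j' l) = (if j = j' then 1 else 0)"
  proof (intro ballI)
    fix j j' assume j: "j \<in> {1..k}" and j': "j' \<in> {1..k}"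
    have "a j l * a j' l = (\<Sum>u\<in>P l. (X j u / sqrt (N j)) * (X j' u / sqrt (N j')))"
      if l: "l \<in> {1..k}" for l
    proof -
      have "(\<Sum>u\<in>P l. (X j u / sqrt (N j)) * (X j' u / sqrt (N j')))
          = n l * ((alpha j l / sqrt (N j)) * (alpha j' l / sqrt (N j')))"
        using X_def j j' l by (simp add: n_def)
      then show ?thesis
        unfolding a_def using card_part_pos[OF l] by (simp add: n_def field_simps)
    qed
    then have "(\<Sum>l\<in>{1..k}. a j l * a j' l) = (\<Sum>u\<in>V. (X j u / sqrt (N j)) * (X j' u / sqrt (N j')))"
      unfolding sum_over_parts by (intro sum.cong) auto
    then show "(\<Sum>l\<in>{1..k}. a j l * a j' l) = (if j = j' then 1 else 0)" using X_orth j j' by simp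
  qed
  have "(\<Sum>j\<in>{1..k}. a j l * a j l')
      = sqrt (n l) * sqrt (n l') * (\<Sum>j\<in>{1..k}. alpha j l * alpha j l' / N j)"
    unfolding sum_distrib_left
  proof (rule sum.cong[OF refl])
    fix j assume j: "j \<in> {1..k}"
    have "sqrt (N j) * sqrt (N j) = N j" using N_pos[OF j] by simp
    then show "a j l * a j l' = sqrt (n l) * sqrt (n l') * (alpha j l * alpha j l' / N j)"
      unfolding a_def by (simp add: field_simps)
  qed
  then have "sqrt (n l) * sqrt (n l') * (\<Sum>j\<in>{1..k}. alpha j l * alpha j l' / N j) = (if l = l' then 1 else 0)"
    using orthonormal_rows_imp_columns[OF rows l l'] by simp
  moreover have "sqrt (n l) * sqrt (n l) = n l" "n l > 0" "n l' > 0"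
    using card_part_pos[OF l] card_part_pos[OF l'] by (simp_all add: n_def)
  ultimately show ?thesis
    by (cases "l = l'") (simp_all add: n_def field_simps)
qed

lemma part_resolution:
  assumes "i \<in> {1..k}" "x \<in> P i" "y \<in> P i"
  shows "(\<Sum>j\<in>{1..card (P i) - 1}. v i j x * v i j y) + 1 / real (card (P i)) = (if x = y then 1 else 0)"
  using assms v_orth v_orth1 v_span
  by (intro onb_with_constant_resolution[OF finite_part part_nonempty]) auto

lemma v_sum_zero:
  assumes i: "i \<in> {1..k}" and j: "j \<in> {1..card (P i) - 1}"
  shows "(\<Sum>z\<in>P i. v i j z) = 0"
proof -
  have "(\<Sum>z\<in>P i. v i j z) / sqrt (real (card (P i))) = 0"
    using v_orth1 i j by (simp add: sum_divide_distrib)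
  then show ?thesis using card_part_pos[OF i] by simp
qed

definition lifted :: "nat \<Rightarrow> nat \<Rightarrow> 'a \<Rightarrow> real" where
  "lifted i j z = (if z \<in> P i then v i j z else 0)"

definition part_index :: "(nat \<times> nat) set" where
  "part_index = (SIGMA i:{1..k}. {1..card (P i) - 1})"

lemma finite_part_index: "finite part_index"
  unfolding part_index_def by auto

lemma lifted_eig:
  "\<forall>p\<in>part_index. \<forall>x\<in>V. (\<Sum>z\<in>V. laplacian V E x z * lifted (fst p) (snd p) z)
           = (lam (fst p) (snd p) + dtilde E k P (fst p)) * lifted (fst p) (snd p) x"
proof (intro ballI)
  fix p x assume p: "p \<in> part_index" and x: "x \<in> V"
  then obtain i j where ij: "p = (i, j)" "i \<in> {1..k}" "j \<in> {1..card (P i) - 1}"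
    unfolding part_index_def by auto
  show "(\<Sum>z\<in>V. laplacian V E x z * lifted (fst p) (snd p) z)
           = (lam (fst p) (snd p) + dtilde E k P (fst p)) * lifted (fst p) (snd p) x"
    unfolding ij lifted_def fst_conv snd_conv
    by (rule lifted_eigenvector[OF ij(2) _ v_sum_zero[OF ij(2,3)] x]) (use v_eig ij in blast)
qed

lemma lifted_in_part: "x \<in> P i \<Longrightarrow> lifted i j x = v i j x"
  by (simp add: lifted_def)

lemma lifted_other_part:
  "l \<in> {1..k} \<Longrightarrow> i \<in> {1..k} \<Longrightarrow> x \<in> P i \<Longrightarrow> l \<noteq> i \<Longrightarrow> lifted l j x = 0"
  using part_unique[of l i x] by (auto simp: lifted_def)

lemma sum_part_index_single:
  assumes i: "i \<in> {1..k}" and vanish: "\<And>l j. l \<in> {1..k} \<Longrightarrow> l \<noteq> i \<Longrightarrow> g (l, j) = 0"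
  shows "sum g part_index = (\<Sum>j\<in>{1..card (P i) - 1}. g (i, j))"
  unfolding part_index_def
  by (rule sum_Sigma_single_fibre[of "{1..k}" i "\<lambda>l. {1..card (P l) - 1}"]) (use i vanish in auto)

lemma whole_resolution:
  "\<forall>x\<in>V. \<forall>y\<in>V. (\<Sum>p\<in>part_index. lifted (fst p) (snd p) x * lifted (fst p) (snd p) y)
         + (\<Sum>j\<in>{1..k}. X j x / sqrt (N j) * (X j y / sqrt (N j))) = (if x = y then 1 else 0)"
proof (intro ballI)
  fix x y assume x: "x \<in> V" and y: "y \<in> V"
  obtain i where i: "i \<in> {1..k}" "x \<in> P i" using part_of_vertex[OF x] by blast
  obtain i' where i': "i' \<in> {1..k}" "y \<in> P i'" using part_of_vertex[OF y] by blast
  have lifted_sum: "(\<Sum>p\<in>part_index. lifted (fst p) (snd p) x * lifted (fst p) (snd p) y)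
      = (\<Sum>j\<in>{1..card (P i) - 1}. v i j x * lifted i j y)"
    using i by (subst sum_part_index_single[OF i(1)]) (auto simp: lifted_other_part lifted_in_part)
  have quot_sum: "(\<Sum>j\<in>{1..k}. X j x / sqrt (N j) * (X j y / sqrt (N j)))
      = (if i = i' then 1 / real (card (P i)) else 0)"
    using quotient_entry_product i i' quotient_resolution[OF i(1) i'(1)] by simp
  show "(\<Sum>p\<in>part_index. lifted (fst p) (snd p) x * lifted (fst p) (snd p) y)
         + (\<Sum>j\<in>{1..k}. X j x / sqrt (N j) * (X j y / sqrt (N j))) = (if x = y then 1 else 0)"
  proof (cases "i = i'")
    case True
    then have y_i: "y \<in> P i" using i' by simp
    then show ?thesis
      using lifted_sum quot_sum part_resolution[OF i y_i] True by (simp add: lifted_in_part)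
  next
    case False
    then have "y \<notin> P i" "x \<noteq> y" using part_unique i i' by blast+
    then show ?thesis using lifted_sum quot_sum False by (simp add: lifted_def)
  qed
qed

lemma quotient_eig:
  "\<forall>j\<in>{1..k}. \<forall>x\<in>V. (\<Sum>z\<in>V. laplacian V E x z * (X j z / sqrt (N j))) = nu j * (X j x / sqrt (N j))"
  using X_eig by (simp add: sum_divide_distrib[symmetric])

lemma ctqw_op_whole:
  assumes "x \<in> V" "y \<in> V"
  shows "ctqw_op V E t x y
    = (\<Sum>p\<in>part_index. complex_of_real (lifted (fst p) (snd p) x * lifted (fst p) (snd p) y)
          * exp (\<i> * complex_of_real (t * (lam (fst p) (snd p) + dtilde E k P (fst p)))))
    + (\<Sum>j\<in>{1..k}. complex_of_real (X j x / sqrt (N j) * (X j y / sqrt (N j)))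
          * exp (\<i> * complex_of_real (t * nu j)))"
  by (rule ctqw_op_spectral[OF finite_part_index finite_atLeastAtMost lifted_eig quotient_eig
        whole_resolution assms])

lemma ctqw_op_same_part:
  assumes i: "i \<in> {1..k}" and x: "x \<in> P i" and y: "y \<in> P i"
  shows "ctqw_op V E t x y
    = (\<Sum>j\<in>{1..card (P i) - 1}. complex_of_real (v i j x * v i j y)
          * exp (\<i> * complex_of_real (t * (lam i j + dtilde E k P i))))
    + (\<Sum>j\<in>{1..k}. complex_of_real (alpha j i * alpha j i / N j) * exp (\<i> * complex_of_real (t * nu j)))"
proof -
  have "x \<in> V" "y \<in> V" using part_subset[OF i] x y by auto
  moreover have "(\<Sum>p\<in>part_index. complex_of_real (lifted (fst p) (snd p) x * lifted (fst p) (snd p) y)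
          * exp (\<i> * complex_of_real (t * (lam (fst p) (snd p) + dtilde E k P (fst p)))))
      = (\<Sum>j\<in>{1..card (P i) - 1}. complex_of_real (v i j x * v i j y)
          * exp (\<i> * complex_of_real (t * (lam i j + dtilde E k P i))))"
    using i x y by (subst sum_part_index_single[OF i]) (auto simp: lifted_other_part lifted_in_part)
  moreover have "(\<Sum>j\<in>{1..k}. complex_of_real (X j x / sqrt (N j) * (X j y / sqrt (N j)))
          * exp (\<i> * complex_of_real (t * nu j)))
      = (\<Sum>j\<in>{1..k}. complex_of_real (alpha j i * alpha j i / N j) * exp (\<i> * complex_of_real (t * nu j)))"
    by (rule sum.cong[OF refl]) (simp only: quotient_entry_product[OF _ i i x y])
  ultimately show ?thesis by (simp only: ctqw_op_whole)
qed

lemma ctqw_op_other_part: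
  assumes i: "i \<in> {1..k}" and i': "i' \<in> {1..k}" and ii': "i \<noteq> i'" and x: "x \<in> P i" and y: "y \<in> P i'"
  shows "ctqw_op V E t x y
    = (\<Sum>j\<in>{1..k}. complex_of_real (alpha j i * alpha j i' / N j) * exp (\<i> * complex_of_real (t * nu j)))"
proof -
  have "x \<in> V" "y \<in> V" using part_subset i i' x y by auto
  moreover have "y \<notin> P i" using part_unique[OF i i'] ii' y by blast
  then have "(\<Sum>p\<in>part_index. complex_of_real (lifted (fst p) (snd p) x * lifted (fst p) (snd p) y)
          * exp (\<i> * complex_of_real (t * (lam (fst p) (snd p) + dtilde E k P (fst p))))) = 0"
    by (subst sum_part_index_single[OF i])
       (simp_all add: lifted_other_part[OF _ i x] lifted_def[of i _ y])
  moreover have "(\<Sum>j\<in>{1..k}. complex_of_real (X j x / sqrt (N j) * (X j y / sqrt (N j)))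
          * exp (\<i> * complex_of_real (t * nu j)))
      = (\<Sum>j\<in>{1..k}. complex_of_real (alpha j i * alpha j i' / N j) * exp (\<i> * complex_of_real (t * nu j)))"
    by (rule sum.cong[OF refl]) (simp only: quotient_entry_product[OF _ i i' x y])
  ultimately show ?thesis by (simp only: ctqw_op_whole add_0)
qed

lemma ctqw_op_part:
  assumes i: "i \<in> {1..k}" and x: "x \<in> P i" and y: "y \<in> P i"
  shows "ctqw_op (P i) E t x y
    = (\<Sum>j\<in>{1..card (P i) - 1}. complex_of_real (v i j x * v i j y) * exp (\<i> * complex_of_real (t * lam i j)))
    + (\<Sum>d\<in>{0::nat}. complex_of_real (1 / real (card (P i))) * exp (\<i> * complex_of_real (t * 0)))"
proof -
  let ?c = "1 / sqrt (real (card (P i)))"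
  have cc: "?c * ?c = 1 / real (card (P i))" using card_part_pos[OF i] by (simp add: field_simps)
  have "ctqw_op (P i) E t x y
    = (\<Sum>j\<in>{1..card (P i) - 1}. complex_of_real (v i j x * v i j y) * exp (\<i> * complex_of_real (t * lam i j)))
    + (\<Sum>d\<in>{0::nat}. complex_of_real (?c * ?c) * exp (\<i> * complex_of_real (t * 0)))"
  proof (rule ctqw_op_spectral[where w = "\<lambda>_ _. ?c" and rho = "\<lambda>_. 0"])
    show "\<forall>d\<in>{0::nat}. \<forall>x\<in>P i. (\<Sum>z\<in>P i. laplacian (P i) E x z * ?c) = 0 * ?c"
    proof (intro ballI)
      fix d z assume "z \<in> P i"
      then have "(\<Sum>w\<in>P i. laplacian (P i) E z w) = 0"
        by (rule laplacian_row_sum[OF finite_part[OF i] irrefl])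
      then show "(\<Sum>w\<in>P i. laplacian (P i) E z w * ?c) = 0 * ?c"
        by (simp add: sum_divide_distrib[symmetric])
    qed
    show "\<forall>x\<in>P i. \<forall>y\<in>P i. (\<Sum>j\<in>{1..card (P i) - 1}. v i j x * v i j y) + (\<Sum>d\<in>{0::nat}. ?c * ?c)
        = (if x = y then 1 else 0)"
      using part_resolution[OF i] cc by simp
  qed (use i x y v_eig in auto)
  then show ?thesis unfolding cc .
qed

lemma ctqw_prob_part:
  assumes i: "i \<in> {1..k}" and x: "x \<in> P i" and y: "y \<in> P i"
  shows "ctqw_prob (P i) E t x y =
      (\<Sum>j\<in>{1..card (P i) - 1}. (v i j x)^2 * (v i j y)^2)
      + 1 / (real (card (P i)))^2
      + 2 * (\<Sum>j\<in>{1..card (P i) - 1}. \<Sum>j'\<in>{j+1..card (P i) - 1}.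
           v i j x * v i j y * v i j' x * v i j' y * cos (t * (lam i j - lam i j')))
      + 2 / real (card (P i)) * (\<Sum>j\<in>{1..card (P i) - 1}. v i j x * v i j y * cos (t * lam i j))"
proof -
  let ?m = "card (P i) - 1" and ?n = "real (card (P i))"
  define w where "w j = v i j x * v i j y" for j
  have "ctqw_prob (P i) E t x y
      = (\<Sum>j\<in>{1..?m}. \<Sum>j'\<in>{1..?m}. w j * w j' * cos (t * lam i j - t * lam i j'))
        + 1 / ?n * (1 / ?n) + 2 * (\<Sum>j\<in>{1..?m}. w j * (1 / ?n) * cos (t * lam i j))"
    unfolding ctqw_prob_def ctqw_op_part[OF i x y] cmod_sq_phase_sums w_def by simp
  also have "(\<Sum>j\<in>{1..?m}. \<Sum>j'\<in>{1..?m}. w j * w j' * cos (t * lam i j - t * lam i j'))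
      = (\<Sum>j\<in>{1..?m}. w j * w j * cos (t * lam i j - t * lam i j))
        + 2 * (\<Sum>j\<in>{1..?m}. \<Sum>j'\<in>{j+1..?m}. w j * w j' * cos (t * lam i j - t * lam i j'))"
    by (rule sum_symmetric_square) (simp add: mult_ac cos_diff)
  finally show ?thesis
    by (simp add: w_def power2_eq_square sum_distrib_left mult_ac right_diff_distrib)
qed

lemma ctqw_prob_same_part:
  assumes i: "i \<in> {1..k}" and x: "x \<in> P i" and y: "y \<in> P i"
  shows "ctqw_prob V E t x y =
      (\<Sum>j\<in>{1..card (P i) - 1}. (v i j x)^2 * (v i j y)^2)
      + 2 * (\<Sum>j\<in>{1..card (P i) - 1}. \<Sum>j'\<in>{j+1..card (P i) - 1}.
           v i j x * v i j y * v i j' x * v i j' y * cos (t * (lam i j - lam i j')))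
      + ((\<Sum>j\<in>{1..k}. (alpha j i)^4 / (N j)^2)
         + 2 * (\<Sum>j\<in>{1..k}. \<Sum>j'\<in>{j+1..k}.
              (alpha j i)^2 * (alpha j' i)^2 * cos (t * (nu j - nu j')) / (N j * N j')))
      + 2 * (\<Sum>j\<in>{1..card (P i) - 1}. \<Sum>j'\<in>{1..k}.
           v i j x * v i j y * (alpha j' i)^2 * cos (t * (lam i j + dtilde E k P i - nu j')) / N j')"
proof -
  let ?m = "card (P i) - 1" and ?d = "dtilde E k P i"
  define w where "w j = v i j x * v i j y" for j
  define e where "e j = alpha j i * alpha j i / N j" for j
  have shift: "t * (a + ?d) - t * (b + ?d) = t * a - t * b" for a b by (simp add: algebra_simps)
  have "ctqw_prob V E t x y
      = (\<Sum>j\<in>{1..?m}. \<Sum>j'\<in>{1..?m}. w j * w j' * cos (t * (lam i j + ?d) - t * (lam i j' + ?d)))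
      + (\<Sum>j\<in>{1..k}. \<Sum>j'\<in>{1..k}. e j * e j' * cos (t * nu j - t * nu j'))
      + 2 * (\<Sum>j\<in>{1..?m}. \<Sum>j'\<in>{1..k}. w j * e j' * cos (t * (lam i j + ?d) - t * nu j'))"
    unfolding ctqw_prob_def ctqw_op_same_part[OF i x y] cmod_sq_phase_sums w_def e_def ..
  also have "(\<Sum>j\<in>{1..?m}. \<Sum>j'\<in>{1..?m}. w j * w j' * cos (t * (lam i j + ?d) - t * (lam i j' + ?d)))
      = (\<Sum>j\<in>{1..?m}. w j * w j * cos (t * lam i j - t * lam i j))
        + 2 * (\<Sum>j\<in>{1..?m}. \<Sum>j'\<in>{j+1..?m}. w j * w j' * cos (t * lam i j - t * lam i j'))"
    unfolding shift by (rule sum_symmetric_square) (simp add: mult_ac cos_diff)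
  also have "(\<Sum>j\<in>{1..k}. \<Sum>j'\<in>{1..k}. e j * e j' * cos (t * nu j - t * nu j'))
      = (\<Sum>j\<in>{1..k}. e j * e j * cos (t * nu j - t * nu j))
        + 2 * (\<Sum>j\<in>{1..k}. \<Sum>j'\<in>{j+1..k}. e j * e j' * cos (t * nu j - t * nu j'))"
    by (rule sum_symmetric_square) (simp add: mult_ac cos_diff)
  finally show ?thesis
    by (simp add: w_def e_def power2_eq_square right_diff_distrib field_simps eval_nat_numeral)
qed

lemma ctqw_prob_other_part:
  assumes i: "i \<in> {1..k}" and i': "i' \<in> {1..k}" and ii': "i \<noteq> i'" and x: "x \<in> P i" and y: "y \<in> P i'"
  shows "ctqw_prob V E t x y =
      (\<Sum>j\<in>{1..k}. (alpha j i)^2 * (alpha j i')^2 / (N j)^2)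
      + 2 * (\<Sum>j\<in>{1..k}. \<Sum>j'\<in>{j+1..k}.
           alpha j i * alpha j i' * alpha j' i * alpha j' i' * cos (t * (nu j - nu j')) / (N j * N j'))"
  unfolding ctqw_prob_def ctqw_op_other_part[OF i i' ii' x y] cmod_sq_phase_sum
  by (simp add: power2_eq_square right_diff_distrib field_simps)

end

theorem lemma2p1:
  fixes V :: "'a set" and E :: "'a \<Rightarrow> 'a \<Rightarrow> bool" and k :: nat and P :: "nat \<Rightarrow> 'a set"
    and v :: "nat \<Rightarrow> nat \<Rightarrow> 'a \<Rightarrow> real" and lam :: "nat \<Rightarrow> nat \<Rightarrow> real"
    and alpha :: "nat \<Rightarrow> nat \<Rightarrow> real" and X :: "nat \<Rightarrow> 'a \<Rightarrow> real"
    and N :: "nat \<Rightarrow> real" and nu :: "nat \<Rightarrow> real" and t :: real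
  assumes graph: "simple_graph V E"
    and decomp: "fully_interconnected_decomp V E k P"
    and v_eig: "\<forall>i\<in>{1..k}. \<forall>j\<in>{1..card (P i) - 1}. \<forall>x\<in>P i.
                  (\<Sum>y\<in>P i. laplacian (P i) E x y * v i j y) = lam i j * v i j x"
    and v_orth: "\<forall>i\<in>{1..k}. \<forall>j\<in>{1..card (P i) - 1}. \<forall>j'\<in>{1..card (P i) - 1}.
                  (\<Sum>x\<in>P i. v i j x * v i j' x) = (if j = j' then 1 else 0)"
    and v_orth1: "\<forall>i\<in>{1..k}. \<forall>j\<in>{1..card (P i) - 1}.
                  (\<Sum>x\<in>P i. v i j x * (1 / sqrt (real (card (P i))))) = 0"
    and v_span: "\<forall>i\<in>{1..k}. \<forall>f :: 'a \<Rightarrow> real. \<exists>c :: nat \<Rightarrow> real. \<exists>c0 :: real.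
                  \<forall>x\<in>P i. f x = (\<Sum>j\<in>{1..card (P i) - 1}. c j * v i j x)
                                 + c0 * (1 / sqrt (real (card (P i))))"
    and X_def: "\<forall>j\<in>{1..k}. \<forall>l\<in>{1..k}. \<forall>u\<in>P l. X j u = alpha j l"
    and N_def: "\<forall>j\<in>{1..k}. N j = (\<Sum>l\<in>{1..k}. real (card (P l)) * (alpha j l)^2)"
    and X_orth: "\<forall>j\<in>{1..k}. \<forall>j'\<in>{1..k}.
                  (\<Sum>u\<in>V. (X j u / sqrt (N j)) * (X j' u / sqrt (N j'))) = (if j = j' then 1 else 0)"
    and X_eig: "\<forall>j\<in>{1..k}. \<forall>u\<in>V. (\<Sum>w\<in>V. laplacian V E u w * X j w) = nu j * X j u"
    and t_nonneg: "t \<ge> 0"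
  shows "(\<forall>i\<in>{1..k}. \<forall>x\<in>P i. \<forall>y\<in>P i.
            ctqw_prob V E t x y =
              ctqw_prob (P i) E t x y
              + ((\<Sum>j\<in>{1..k}. (alpha j i)^4 / (N j)^2)
                 + 2 * (\<Sum>j\<in>{1..k}. \<Sum>j'\<in>{j+1..k}.
                      (alpha j i)^2 * (alpha j' i)^2 * cos (t * (nu j - nu j')) / (N j * N j')))
              - 1 / (real (card (P i)))^2
              - 2 / real (card (P i)) * (\<Sum>j\<in>{1..card (P i) - 1}. v i j x * v i j y * cos (t * lam i j))
              + 2 * (\<Sum>j\<in>{1..card (P i) - 1}. \<Sum>j'\<in>{1..k}.
                   v i j x * v i j y * (alpha j' i)^2
                   * cos (t * (lam i j + dtilde E k P i - nu j')) / N j')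
          \<and> ctqw_prob (P i) E t x y =
              (\<Sum>j\<in>{1..card (P i) - 1}. (v i j x)^2 * (v i j y)^2)
              + 1 / (real (card (P i)))^2
              + 2 * (\<Sum>j\<in>{1..card (P i) - 1}. \<Sum>j'\<in>{j+1..card (P i) - 1}.
                   v i j x * v i j y * v i j' x * v i j' y * cos (t * (lam i j - lam i j')))
              + 2 / real (card (P i)) * (\<Sum>j\<in>{1..card (P i) - 1}. v i j x * v i j y * cos (t * lam i j)))
       \<and> (\<forall>i\<in>{1..k}. \<forall>i'\<in>{1..k}. i \<noteq> i' \<longrightarrow> (\<forall>x\<in>P i. \<forall>y\<in>P i'.
            ctqw_prob V E t x y =
              (\<Sum>j\<in>{1..k}. (alpha j i)^2 * (alpha j i')^2 / (N j)^2)
              + 2 * (\<Sum>j\<in>{1..k}. \<Sum>j'\<in>{j+1..k}.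
                   alpha j i * alpha j i' * alpha j' i * alpha j' i' * cos (t * (nu j - nu j'))
                   / (N j * N j'))))"
proof -
  interpret spectral_data V E k P v lam alpha X N nu
    by unfold_locales (use assms in blast)+
  show ?thesis
    using ctqw_prob_part ctqw_prob_same_part ctqw_prob_other_part by simp
qed

end
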